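(* Fix $\lambda$ and let $r_1,\ldots,r_n$ be i.i.d. real random variables with CDF $F_\lambda$ and density $f_\lambda$, with empirical CDF $\hat F_{n,\lambda}$. Assume $r_i\in[a,b]$ almost surely for some $-\infty<a<b<\infty$, with $\inf_{r\in[a,b]}f_\lambda(r)>0$ and $\sup_{r\in[a,b]}f'_\lambda(r)<\infty$. Let $\psi(y)=\int_0^y\psi'(z)\,dz$ define a probability measure on $[0,1]$, where $\psi'$ is bounded and continuous at $F_\lambda(r)$ for Lebesgue-almost every $r$. Let $$\sigma^2(\lambda)=\int_0^1\!\!\int_0^1\frac{p\wedge p'-pp'}{f_\lambda(F_\lambda^{-1}(p))\,f_\lambda(F_\lambda^{-1}(p'))}\,d\psi(p)\,d\psi(p')$$ and $$\hat\sigma_n^2(\lambda)=\int_a^b\!\!\int_a^b\psi'(\hat F_{n,\lambda}(r))\,\psi'(\hat F_{n,\lambda}(\tilde r))\,\big(\hat F_{n,\lambda}(r\wedge\tilde r)-\hat F_{n,\lambda}(r)\hat F_{n,\lambda}(\tilde r)\big)\,dr\,d\tilde r.$$ Then $\hat\sigma_n^2(\lambda)\to\sigma^2(\lambda)$ almost surely as $n\to\infty$.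
   Context: $F^{-1}(p)=\inf\{x:F(x)\ge p\}$ denotes the $p$-th quantile of a distribution function $F$. *)

theory Defs
  imports "HOL-Probability.Probability"
begin

definition quantile :: "(real \<Rightarrow> real) \<Rightarrow> real \<Rightarrow> real" where
  "quantile F p = Inf {x. p \<le> F x}"

definition ecdf :: "(nat \<Rightarrow> 'a \<Rightarrow> real) \<Rightarrow> nat \<Rightarrow> 'a \<Rightarrow> real \<Rightarrow> real" where
  "ecdf X n \<omega> r = real (card {i \<in> {..<n}. X i \<omega> \<le> r}) / real n"

text \<open>Asymptotic variance sigma^2 with d psi(p) = psi' p dp.\<close>
definition sigma2 :: "(real \<Rightarrow> real) \<Rightarrow> (real \<Rightarrow> real) \<Rightarrow> (real \<Rightarrow> real) \<Rightarrow> real" where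
  "sigma2 F f psi' =
     (LBINT p:{0..1}. LBINT p':{0..1}.
        (min p p' - p * p') / (f (quantile F p) * f (quantile F p')) * psi' p * psi' p')"

definition sigma2_hat :: "(nat \<Rightarrow> 'a \<Rightarrow> real) \<Rightarrow> (real \<Rightarrow> real) \<Rightarrow> real \<Rightarrow> real \<Rightarrow> nat \<Rightarrow> 'a \<Rightarrow> real" where
  "sigma2_hat X psi' a b n \<omega> =
     (LBINT r:{a..b}. LBINT r':{a..b}.
        psi' (ecdf X n \<omega> r) * psi' (ecdf X n \<omega> r') *
        (ecdf X n \<omega> (min r r') - ecdf X n \<omega> r * ecdf X n \<omega> r'))"

end

theory Submission
  imports Defs
begin

(*
  The substitution p = F r, p' = F r' turns sigma2 into the double integral over [a,b]^2 of
  psi'(F r) psi'(F r') (F (min r r') - F r F r'): F is continuous, so F(r_1) is uniform on [0,1],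
  and on (a,b], where f > 0, F is strictly increasing, so F^{-1}(F r) = r and the Jacobian f r
  cancels the factor 1 / f(F^{-1}(p)). This is the estimator with the empirical cdf replaced by F.
  By Hoeffding's inequality and Borel-Cantelli the empirical cdf converges to F almost surely at
  every rational point, hence, F being continuous and the empirical cdfs monotone, everywhere;
  bounded convergence, applied to the inner and then to the outer integral, gives the claim.
  Of the hypotheses on psi' only measurability, boundedness and continuity at F r for a.e. r are
  used.
*)

lemma borel_measurable_set_integral_snd:
  fixes g :: "real \<Rightarrow> real \<Rightarrow> real"
  assumes "(\<lambda>(x, y). g x y) \<in> borel_measurable (borel \<Otimes>\<^sub>M borel)" and [measurable]: "A \<in> sets borel"
  shows "(\<lambda>x. LBINT y:A. g x y) \<in> borel_measurable borel"
proof -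
  have "(\<lambda>(x, y). indicator A y *\<^sub>R g x y) \<in> borel_measurable (borel \<Otimes>\<^sub>M lborel)"
    using assms(1) by (simp add: measurable_cong_sets[OF sets_pair_measure_cong[OF refl sets_lborel] refl])
  then show ?thesis
    unfolding set_lebesgue_integral_def by (rule lborel.borel_measurable_lebesgue_integral)
qed

lemma abs_set_integral_Icc_le:
  fixes g :: "real \<Rightarrow> real"
  assumes [measurable]: "g \<in> borel_measurable borel"
    and bound: "\<And>x. x \<in> {a..b} \<Longrightarrow> \<bar>g x\<bar> \<le> C" and "a \<le> b"
  shows "\<bar>LBINT x:{a..b}. g x\<bar> \<le> C * (b - a)"
proof -
  have "0 \<le> C" using bound[of a] \<open>a \<le> b\<close> by auto
  have integrable_C: "integrable lborel (\<lambda>x. C * indicator {a..b} x)"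
    by (simp add: integrable_indicator_iff emeasure_lborel_Icc_eq)
  have "\<bar>LBINT x:{a..b}. g x\<bar> = norm (LINT x|lborel. indicator {a..b} x *\<^sub>R g x)"
    by (simp add: set_lebesgue_integral_def)
  also have "\<dots> \<le> (LINT x|lborel. norm (indicator {a..b} x *\<^sub>R g x))"
    by (rule integral_norm_bound)
  also have "\<dots> \<le> (LINT x|lborel. C * indicator {a..b} x)"
    by (rule integral_mono'[OF integrable_C]) (use bound \<open>0 \<le> C\<close> in \<open>auto simp: indicator_def\<close>)
  also have "\<dots> = C * (b - a)" using \<open>a \<le> b\<close> by simp
  finally show ?thesis .
qed

lemma tendsto_set_integral_Icc_dominated:
  fixes s :: "nat \<Rightarrow> real \<Rightarrow> real" and g :: "real \<Rightarrow> real"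
  assumes "\<And>n. s n \<in> borel_measurable borel" and "g \<in> borel_measurable borel"
    and lim: "AE x in lborel. x \<in> {a..b} \<longrightarrow> (\<lambda>n. s n x) \<longlonglongrightarrow> g x"
    and bound: "\<And>n x. x \<in> {a..b} \<Longrightarrow> \<bar>s n x\<bar> \<le> C"
  shows "(\<lambda>n. LBINT x:{a..b}. s n x) \<longlonglongrightarrow> (LBINT x:{a..b}. g x)"
  unfolding set_lebesgue_integral_def
proof (rule integral_dominated_convergence[where w="\<lambda>x. C * indicator {a..b} x"])
  show "integrable lborel (\<lambda>x. C * indicator {a..b} x)"
    by (simp add: integrable_indicator_iff emeasure_lborel_Icc_eq)
  show "AE x in lborel. (\<lambda>n. indicator {a..b} x *\<^sub>R s n x) \<longlonglongrightarrow> indicator {a..b} x *\<^sub>R g x"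
    using lim by eventually_elim (auto simp: indicator_def)
  show "AE x in lborel. norm (indicator {a..b} x *\<^sub>R s n x) \<le> C * indicator {a..b} x" for n
    using bound by (auto simp: indicator_def)
qed (use assms in auto)

definition cov_kernel :: "(real \<Rightarrow> real) \<Rightarrow> (real \<Rightarrow> real) \<Rightarrow> real \<Rightarrow> real \<Rightarrow> real" where
  "cov_kernel G psi' r r' = psi' (G r) * psi' (G r') * (G (min r r') - G r * G r')"

lemma borel_measurable_cov_kernel:
  assumes [measurable]: "G \<in> borel_measurable borel" "psi' \<in> borel_measurable borel"
  shows "(\<lambda>(r, r'). cov_kernel G psi' r r') \<in> borel_measurable (borel \<Otimes>\<^sub>M borel)"
  unfolding cov_kernel_def by measurable

lemma borel_measurable_cov_kernel_snd:
  assumes [measurable]: "G \<in> borel_measurable borel" "psi' \<in> borel_measurable borel"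
  shows "(\<lambda>r'. cov_kernel G psi' r r') \<in> borel_measurable borel"
  unfolding cov_kernel_def by measurable

lemma sigma2_hat_eq_cov_kernel:
  "sigma2_hat X psi' a b n \<omega> = (LBINT r:{a..b}. LBINT r':{a..b}. cov_kernel (ecdf X n \<omega>) psi' r r')"
  unfolding sigma2_hat_def cov_kernel_def ..

lemma abs_cov_kernel_le:
  assumes G: "\<And>x. G x \<in> {0..1}" and psi': "\<forall>z\<in>{0..1}. \<bar>psi' z\<bar> \<le> B"
  shows "\<bar>cov_kernel G psi' r r'\<bar> \<le> B * B"
proof -
  have "0 \<le> B" using psi' by fastforce
  have "G r * G r' \<in> {0..1}"
    using G[of r] G[of r'] by (auto intro: mult_le_one)
  then have "\<bar>G (min r r') - G r * G r'\<bar> \<le> 1"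
    using G[of "min r r'"] by (auto simp: abs_le_iff)
  then have "\<bar>psi' (G r)\<bar> * \<bar>psi' (G r')\<bar> * \<bar>G (min r r') - G r * G r'\<bar> \<le> B * B * 1"
    using psi' G \<open>0 \<le> B\<close> by (intro mult_mono) auto
  then show ?thesis by (simp add: cov_kernel_def abs_mult)
qed

lemma tendsto_double_integral_cov_kernel:
  fixes G :: "nat \<Rightarrow> real \<Rightarrow> real" and H psi' :: "real \<Rightarrow> real"
  assumes [measurable]: "\<And>n. G n \<in> borel_measurable borel" "psi' \<in> borel_measurable borel"
    and G_bounds: "\<And>n x. G n x \<in> {0..1}"
    and G_tendsto: "\<And>x. (\<lambda>n. G n x) \<longlonglongrightarrow> H x"
    and psi'_bounded: "\<forall>z\<in>{0..1}. \<bar>psi' z\<bar> \<le> B"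
    and psi'_cont: "AE r in lborel. continuous (at (H r) within {0..1}) psi'"
    and "a \<le> b"
  shows "(\<lambda>n. LBINT r:{a..b}. LBINT r':{a..b}. cov_kernel (G n) psi' r r')
           \<longlonglongrightarrow> (LBINT r:{a..b}. LBINT r':{a..b}. cov_kernel H psi' r r')"
proof -
  have [measurable]: "H \<in> borel_measurable borel"
    by (rule borel_measurable_LIMSEQ_real[where u=G, OF G_tendsto]) simp
  have inner_measurable: "(\<lambda>r. LBINT r':{a..b}. cov_kernel G' psi' r r') \<in> borel_measurable borel"
    if "G' \<in> borel_measurable borel" for G'
    by (rule borel_measurable_set_integral_snd) (simp_all add: borel_measurable_cov_kernel that)
  have kernel_tendsto: "(\<lambda>n. cov_kernel (G n) psi' r r') \<longlonglongrightarrow> cov_kernel H psi' r r'"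
    if "continuous (at (H r) within {0..1}) psi'" "continuous (at (H r') within {0..1}) psi'" for r r'
    unfolding cov_kernel_def
    by (intro tendsto_intros continuous_within_tendsto_compose'[OF that(1)]
        continuous_within_tendsto_compose'[OF that(2)] G_tendsto G_bounds)
  have inner_tendsto: "(\<lambda>n. LBINT r':{a..b}. cov_kernel (G n) psi' r r') \<longlonglongrightarrow> (LBINT r':{a..b}. cov_kernel H psi' r r')"
    if "continuous (at (H r) within {0..1}) psi'" for r
  proof (rule tendsto_set_integral_Icc_dominated[where C="B * B"])
    show "AE r' in lborel. r' \<in> {a..b} \<longrightarrow> (\<lambda>n. cov_kernel (G n) psi' r r') \<longlonglongrightarrow> cov_kernel H psi' r r'"
      using psi'_cont by eventually_elim (use kernel_tendsto that in blast)
    show "\<bar>cov_kernel (G n) psi' r r'\<bar> \<le> B * B" for n r'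
      by (rule abs_cov_kernel_le[OF G_bounds psi'_bounded])
  qed (simp_all add: borel_measurable_cov_kernel_snd)
  show ?thesis
  proof (rule tendsto_set_integral_Icc_dominated[where C="B * B * (b - a)"])
    show "AE r in lborel. r \<in> {a..b} \<longrightarrow>
        (\<lambda>n. LBINT r':{a..b}. cov_kernel (G n) psi' r r') \<longlonglongrightarrow> (LBINT r':{a..b}. cov_kernel H psi' r r')"
      using psi'_cont by eventually_elim (use inner_tendsto in blast)
    show "\<bar>LBINT r':{a..b}. cov_kernel (G n) psi' r r'\<bar> \<le> B * B * (b - a)" for n r
      by (rule abs_set_integral_Icc_le)
        (simp_all add: borel_measurable_cov_kernel_snd abs_cov_kernel_le[OF G_bounds psi'_bounded] \<open>a \<le> b\<close>)
  qed (simp_all add: inner_measurable)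
qed

lemma AE_tendsto_metricI:
  fixes g :: "nat \<Rightarrow> 'a \<Rightarrow> 'b::metric_space"
  assumes "\<And>e. e > 0 \<Longrightarrow> AE x in M. eventually (\<lambda>n. dist (g n x) (L x) < e) sequentially"
  shows "AE x in M. (\<lambda>n. g n x) \<longlonglongrightarrow> L x"
proof -
  have "AE x in M. \<forall>k::nat. eventually (\<lambda>n. dist (g n x) (L x) < inverse (Suc k)) sequentially"
    by (subst AE_all_countable) (auto intro: assms)
  then show ?thesis
  proof eventually_elim
    case (elim x)
    show ?case
    proof (rule tendstoI)
      fix e :: real assume "e > 0"
      then obtain k where "inverse (real (Suc k)) < e" using reals_Archimedean by blast
      with elim have "eventually (\<lambda>n. dist (g n x) (L x) < inverse (Suc k)) sequentially" by blast
      then show "eventually (\<lambda>n. dist (g n x) (L x) < e) sequentially"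
        by eventually_elim (use \<open>inverse (real (Suc k)) < e\<close> in linarith)
    qed
  qed
qed

lemma (in prob_space) strong_law_bounded_iid:
  fixes Y :: "nat \<Rightarrow> 'a \<Rightarrow> real" and l u :: real
  assumes indep: "indep_vars (\<lambda>_. borel) Y UNIV"
    and ident: "\<And>i. distr M borel (Y i) = distr M borel (Y 0)"
    and bounded: "AE \<omega> in M. Y 0 \<omega> \<in> {l..u}" and "l < u"
  shows "AE \<omega> in M. (\<lambda>n. (\<Sum>i<n. Y i \<omega>) / n) \<longlonglongrightarrow> expectation (Y 0)"
proof (rule AE_tendsto_metricI)
  fix e :: real assume "e > 0"
  have [measurable]: "Y i \<in> borel_measurable M" for i
    using indep by (simp add: indep_vars_def)
  define A where "A n = {\<omega>\<in>space M. \<bar>(\<Sum>i<n. Y i \<omega>) / n - expectation (Y 0)\<bar> \<ge> e}" for n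
  have Hoeffding: "prob (A n) \<le> 2 * exp (-2 * e\<^sup>2 / (u - l)\<^sup>2) ^ n" if "n > 0" for n
  proof -
    interpret Hoeffding_ineq_iid M "{..<n}" Y "Y 0" l u "expectation (Y 0)"
    proof unfold_locales
      show "indep_vars (\<lambda>_. borel) Y {..<n}" using indep by (rule indep_vars_subset) simp
    qed (use ident bounded in auto)
    have "prob {x\<in>space M. \<bar>(\<Sum>i\<in>{..<n}. Y i x) / real (card {..<n}) - expectation (Y 0)\<bar> \<ge> e}
       \<le> 2 * exp (-2 * real (card {..<n}) * e\<^sup>2 / (u - l)\<^sup>2)"
      by (rule Hoeffding_ineq_abs_ge') (use \<open>e > 0\<close> \<open>l < u\<close> that in auto)
    then have "prob (A n) \<le> 2 * exp (-2 * real n * e\<^sup>2 / (u - l)\<^sup>2)"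
      by (simp only: A_def card_lessThan)
    also have "\<dots> = 2 * exp (-2 * e\<^sup>2 / (u - l)\<^sup>2) ^ n"
      by (simp flip: exp_of_nat_mult add: mult_ac)
    finally show ?thesis .
  qed
  have "summable (\<lambda>n. 2 * exp (-2 * e\<^sup>2 / (u - l)\<^sup>2) ^ n)"
    using \<open>e > 0\<close> \<open>l < u\<close> by (intro summable_mult summable_geometric) simp
  then have "summable (\<lambda>n. measure M (A n))"
    by (rule summable_comparison_test[rotated]) (use Hoeffding in \<open>auto intro!: exI[of _ 1]\<close>)
  then have "AE \<omega> in M. eventually (\<lambda>n. \<omega> \<in> space M - A n) sequentially"
    by (intro borel_cantelli_AE1) (auto simp: A_def emeasure_eq_measure)
  then show "AE \<omega> in M. eventually (\<lambda>n. dist ((\<Sum>i<n. Y i \<omega>) / n) (expectation (Y 0)) < e) sequentially"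
    by eventually_elim (auto elim!: eventually_mono simp: A_def dist_real_def)
qed

lemma tendsto_of_mono_tendsto_Rats:
  fixes E :: "nat \<Rightarrow> real \<Rightarrow> real" and F :: "real \<Rightarrow> real"
  assumes mono: "\<And>n. mono (E n)" and cont: "isCont F x"
    and conv: "\<And>q. q \<in> \<rat> \<Longrightarrow> (\<lambda>n. E n q) \<longlonglongrightarrow> F q"
  shows "(\<lambda>n. E n x) \<longlonglongrightarrow> F x"
proof (rule order_tendstoI)
  fix y assume "y < F x"
  then have "\<forall>\<^sub>F t in at x. y < F t"
    using cont by (simp add: isCont_def order_tendstoD(1))
  then obtain d where "d > 0" and d: "\<And>t. t \<noteq> x \<Longrightarrow> dist t x < d \<Longrightarrow> y < F t"
    unfolding eventually_at by blast
  obtain q where q: "q \<in> \<rat>" "x - d < q" "q < x"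
    using Rats_dense_in_real[of "x - d" x] \<open>d > 0\<close> by auto
  have "y < F q" using d[of q] q by (auto simp: dist_real_def)
  then have "\<forall>\<^sub>F n in sequentially. y < E n q" using conv[OF q(1)] by (simp add: order_tendstoD(1))
  then show "\<forall>\<^sub>F n in sequentially. y < E n x"
    by eventually_elim (meson less_le_trans less_imp_le monoD mono q(3))
next
  fix y assume "F x < y"
  then have "\<forall>\<^sub>F t in at x. F t < y"
    using cont by (simp add: isCont_def order_tendstoD(2))
  then obtain d where "d > 0" and d: "\<And>t. t \<noteq> x \<Longrightarrow> dist t x < d \<Longrightarrow> F t < y"
    unfolding eventually_at by blast
  obtain q where q: "q \<in> \<rat>" "x < q" "q < x + d"
    using Rats_dense_in_real[of x "x + d"] \<open>d > 0\<close> by auto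
  have "F q < y" using d[of q] q by (auto simp: dist_real_def)
  then have "\<forall>\<^sub>F n in sequentially. E n q < y" using conv[OF q(1)] by (simp add: order_tendstoD(2))
  then show "\<forall>\<^sub>F n in sequentially. E n x < y"
    by eventually_elim (meson le_less_trans less_imp_le monoD mono q(2))
qed

lemma ecdf_mono: "mono (ecdf X n \<omega>)"
proof (rule monoI)
  fix x y :: real assume "x \<le> y"
  then have "card {i \<in> {..<n}. X i \<omega> \<le> x} \<le> card {i \<in> {..<n}. X i \<omega> \<le> y}"
    by (intro card_mono) auto
  then show "ecdf X n \<omega> x \<le> ecdf X n \<omega> y"
    unfolding ecdf_def by (simp add: divide_right_mono)
qed

lemma ecdf_borel_measurable [measurable]: "ecdf X n \<omega> \<in> borel_measurable borel"
  by (rule borel_measurable_mono[OF ecdf_mono])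

lemma ecdf_bounds: "ecdf X n \<omega> r \<in> {0..1}"
proof -
  have "card {i \<in> {..<n}. X i \<omega> \<le> r} \<le> card {..<n}"
    by (intro card_mono) auto
  then show ?thesis
    unfolding ecdf_def by (cases "n = 0") (auto simp: divide_simps)
qed

lemma ecdf_eq_sample_mean: "ecdf X n \<omega> r = (\<Sum>i<n. indicator {..r} (X i \<omega>)) / n"
proof -
  have "(\<Sum>i<n. indicator {..r} (X i \<omega>) :: real) = card {i \<in> {..<n}. X i \<omega> \<le> r}"
    by (simp add: indicator_def sum.If_cases Int_def)
  then show ?thesis by (simp add: ecdf_def)
qed

lemma (in prob_space) AE_ecdf_tendsto_cdf:
  fixes X :: "nat \<Rightarrow> 'a \<Rightarrow> real"
  assumes indep: "indep_vars (\<lambda>_. borel) X UNIV"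
    and ident: "\<And>i. distr M borel (X i) = distr M borel (X 0)"
  shows "AE \<omega> in M. (\<lambda>n. ecdf X n \<omega> r) \<longlonglongrightarrow> cdf (distr M borel (X 0)) r"
proof -
  have [measurable]: "X i \<in> borel_measurable M" for i
    using indep by (simp add: indep_vars_def)
  define Y :: "nat \<Rightarrow> 'a \<Rightarrow> real" where "Y i \<omega> = indicator {..r} (X i \<omega>)" for i \<omega>
  have "AE \<omega> in M. (\<lambda>n. (\<Sum>i<n. Y i \<omega>) / n) \<longlonglongrightarrow> expectation (Y 0)"
  proof (rule strong_law_bounded_iid[where l=0 and u=1])
    show "indep_vars (\<lambda>_. borel) Y UNIV"
      unfolding Y_def by (rule indep_vars_compose2[OF indep]) simp
    have "distr M borel (Y i) = distr (distr M borel (X i)) borel (indicator {..r})" for i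
      by (simp add: Y_def[abs_def] distr_distr comp_def)
    then show "distr M borel (Y i) = distr M borel (Y 0)" for i
      by (simp only: ident[of i])
  qed (auto simp: Y_def)
  moreover have "expectation (Y 0) = cdf (distr M borel (X 0)) r"
  proof -
    have "expectation (Y 0) = (\<integral>x. indicator {..r} x \<partial>distr M borel (X 0))"
      unfolding Y_def by (rule integral_distr[symmetric]) auto
    then show ?thesis by (simp add: cdf_def)
  qed
  ultimately show ?thesis
    by (simp add: ecdf_eq_sample_mean Y_def)
qed

lemma (in prob_space) AE_ecdf_tendsto_continuous_cdf:
  fixes X :: "nat \<Rightarrow> 'a \<Rightarrow> real"
  assumes indep: "indep_vars (\<lambda>_. borel) X UNIV"
    and ident: "\<And>i. distr M borel (X i) = distr M borel (X 0)"
    and cont: "\<And>r. isCont (cdf (distr M borel (X 0))) r"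
  shows "AE \<omega> in M. \<forall>r. (\<lambda>n. ecdf X n \<omega> r) \<longlonglongrightarrow> cdf (distr M borel (X 0)) r"
proof -
  have "AE \<omega> in M. \<forall>q::rat. (\<lambda>n. ecdf X n \<omega> (of_rat q)) \<longlonglongrightarrow> cdf (distr M borel (X 0)) (of_rat q)"
    unfolding AE_all_countable using AE_ecdf_tendsto_cdf[OF indep ident] by blast
  then show ?thesis
  proof eventually_elim
    case (elim \<omega>)
    show ?case
    proof
      fix r
      show "(\<lambda>n. ecdf X n \<omega> r) \<longlonglongrightarrow> cdf (distr M borel (X 0)) r"
        by (rule tendsto_of_mono_tendsto_Rats[OF ecdf_mono cont]) (use elim in \<open>auto elim: Rats_cases\<close>)
    qed
  qed
qed

lemma sublevel_set_continuous_mono_eq_atMost: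
  fixes F :: "real \<Rightarrow> real"
  assumes mono: "mono F" and cont: "\<And>x. isCont F x" and "F x \<le> t" and "t < F y"
  obtains s where "{x. F x \<le> t} = {..s}" and "F s = t"
proof -
  define S where "S = {x. F x \<le> t}"
  define s where "s = Sup S"
  have S_below: "z < y" if "z \<in> S" for z
    using that \<open>t < F y\<close> monoD[OF mono, of y z] by (force simp: S_def)
  then have "bdd_above S"
    by (meson bdd_above.I less_imp_le)
  moreover have "closed S"
    unfolding S_def using cont by (intro closed_Collect_le continuous_on_const continuous_at_imp_continuous_on) auto
  moreover have "S \<noteq> {}"
    using \<open>F x \<le> t\<close> by (auto simp: S_def)
  ultimately have "s \<in> S"
    unfolding s_def using closed_contains_Sup by blast
  have S_eq: "S = {..s}"
  proof (intro antisym subsetI)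
    fix z assume "z \<in> S"
    then show "z \<in> {..s}" using cSup_upper[OF _ \<open>bdd_above S\<close>] by (simp add: s_def)
  next
    fix z assume "z \<in> {..s}"
    then have "F z \<le> F s" using mono by (simp add: monoD)
    with \<open>s \<in> S\<close> show "z \<in> S" by (simp add: S_def)
  qed
  have "s \<le> y" using S_below[OF \<open>s \<in> S\<close>] by simp
  moreover have "continuous_on {s..y} F"
    using cont by (intro continuous_at_imp_continuous_on) simp
  ultimately obtain z where "s \<le> z" "F z = t"
    using IVT'[of F s t y] \<open>s \<in> S\<close> \<open>t < F y\<close> by (auto simp: S_def)
  moreover have "z \<le> s"
    using S_eq \<open>F z = t\<close> by (auto simp: S_def)
  ultimately have "F s = t" by simp
  with S_eq show thesis by (intro that) (simp_all add: S_def)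
qed

lemma (in real_distribution) measure_cdf_le:
  assumes cont: "\<And>x. isCont (cdf M) x" and t: "t \<in> {0..1}"
  shows "measure M {x. cdf M x \<le> t} = t"
proof (cases "t = 1")
  case True
  then show ?thesis using cdf_bounded_prob prob_space by simp
next
  case False
  obtain y where "t < cdf M y"
    using order_tendstoD(1)[OF cdf_lim_at_top_prob, of t] t False by (auto simp: eventually_at_top_linorder)
  show ?thesis
  proof (cases "\<exists>x. cdf M x \<le> t")
    case True
    then obtain x where "cdf M x \<le> t" ..
    have "mono (cdf M)" using cdf_nondecreasing by (simp add: mono_def)
    from sublevel_set_continuous_mono_eq_atMost[OF this cont \<open>cdf M x \<le> t\<close> \<open>t < cdf M y\<close>]
    show ?thesis by (metis cdf_def)
  next
    case False
    have "\<not> 0 < t"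
    proof
      assume "0 < t"
      then obtain x where "cdf M x < t"
        using order_tendstoD(2)[OF cdf_lim_at_bot] by (auto simp: eventually_at_bot_linorder)
      with False show False by (blast dest: less_imp_le)
    qed
    with False t show ?thesis by simp
  qed
qed

lemma (in real_distribution) integral_comp_continuous_cdf:
  fixes h :: "real \<Rightarrow> real"
  assumes cont: "\<And>x. isCont (cdf M) x" and [measurable]: "h \<in> borel_measurable borel"
  shows "(\<integral>x. h (cdf M x) \<partial>M) = (LBINT p:{0..1}. h p)"
proof -
  have [measurable]: "cdf M \<in> borel_measurable borel"
    using cdf_nondecreasing by (intro borel_measurable_mono) (auto simp: mono_def)
  have "distributed M lborel (cdf M) (\<lambda>p. indicator {0..1} p / measure lborel {0..1::real})"
    using measure_cdf_le[OF cont] by (intro uniform_distrI_borel_atLeastAtMost) (auto simp: Collect_conj_eq)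
  from distributed_integral[OF this, of h]
  show ?thesis by (simp add: set_lebesgue_integral_def)
qed

(* Outside (0,1) the quantile is a junk value (Inf UNIV for p <= 0, Inf {} for p > 1, and also
   possibly Inf {} at p = 1), hence the separate pieces on which it is monotone. *)
lemma (in real_distribution) borel_measurable_quantile_cdf:
  "quantile (cdf M) \<in> borel_measurable borel"
proof (rule borel_measurable_piecewise_mono[of "{{..0}, {0<..<1}, {1}, {1<..}}"])
  have "{x. p \<le> cdf M x} = UNIV" if "p \<le> 0" for p
    using cdf_nonneg that by (auto intro: order_trans)
  then have "mono_on {..0} (quantile (cdf M))"
    by (intro mono_onI) (simp add: quantile_def)
  moreover have "{x. p \<le> cdf M x} = {}" if "1 < p" for p
    using cdf_bounded_prob that by (auto simp: not_le intro: le_less_trans)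
  then have "mono_on {1<..} (quantile (cdf M))"
    by (intro mono_onI) (simp add: quantile_def)
  moreover have "mono_on {0<..<1} (quantile (cdf M))"
  proof (rule mono_onI)
    fix p q :: real assume p: "p \<in> {0<..<1}" and q: "q \<in> {0<..<1}" and "p \<le> q"
    obtain x where "q \<le> cdf M x"
      using order_tendstoD(1)[OF cdf_lim_at_top_prob, of q] q
      by (auto simp: eventually_at_top_linorder intro: less_imp_le)
    moreover obtain y where y: "\<And>z. z \<le> y \<Longrightarrow> cdf M z < p"
      using order_tendstoD(2)[OF cdf_lim_at_bot, of p] p by (auto simp: eventually_at_bot_linorder)
    then have "bdd_below {x. p \<le> cdf M x}"
      by (intro bdd_belowI[of _ y]) (meson mem_Collect_eq not_le less_imp_le)
    ultimately show "quantile (cdf M) p \<le> quantile (cdf M) q"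
      unfolding quantile_def using \<open>p \<le> q\<close> by (intro cInf_superset_mono) auto
  qed
  moreover have "mono_on {1} (quantile (cdf M))"
    by (simp add: mono_on_def)
  ultimately show "mono_on c (quantile (cdf M))" if "c \<in> {{..0}, {0<..<1}, {1}, {1<..}}" for c
    using that by auto
qed auto

locale positive_density_on_interval =
  fixes f :: "real \<Rightarrow> real" and a b :: real
  assumes f_nonneg: "\<And>x. 0 \<le> f x"
    and f_borel [measurable]: "f \<in> borel_measurable borel"
    and prob_space_density: "prob_space (density lborel (\<lambda>x. ennreal (f x)))"
    and support: "AE x in density lborel (\<lambda>x. ennreal (f x)). x \<in> {a..b}"
    and f_pos: "\<And>x. x \<in> {a..b} \<Longrightarrow> 0 < f x"
begin

sublocale \<nu>: real_distribution "density lborel (\<lambda>x. ennreal (f x))"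
  using prob_space_density by (simp add: real_distribution_def real_distribution_axioms_def)

abbreviation F :: "real \<Rightarrow> real" where
  "F \<equiv> cdf (density lborel (\<lambda>x. ennreal (f x)))"

lemma isCont_F: "isCont F x"
proof -
  have "emeasure (density lborel (\<lambda>x. ennreal (f x))) {x} = 0"
    by (subst emeasure_density) (auto simp: nn_integral_indicator_singleton)
  then show ?thesis
    by (simp add: \<nu>.isCont_cdf measure_def)
qed

lemma F_mono: "mono F"
  using \<nu>.cdf_nondecreasing by (simp add: mono_def)

lemma F_borel [measurable]: "F \<in> borel_measurable borel"
  by (rule borel_measurable_mono[OF F_mono])

lemma F_left_end: "F a = 0"
proof -
  have "F a = \<nu>.prob {a}"
    unfolding cdf_def by (rule measure_eq_AE) (use support in \<open>auto elim!: eventually_mono\<close>)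
  then show ?thesis
    using isCont_F \<nu>.isCont_cdf by simp
qed

lemma F_strict_mono_on: "strict_mono_on {a..b} F"
proof (rule strict_mono_onI)
  fix x y assume "x \<in> {a..b}" "y \<in> {a..b}" "x < y"
  have "emeasure (density lborel (\<lambda>x. ennreal (f x))) {x<..y} \<noteq> 0"
  proof
    assume "emeasure (density lborel (\<lambda>x. ennreal (f x))) {x<..y} = 0"
    then have "AE t in lborel. t \<in> {x<..y} \<longrightarrow> f t = 0"
      by (subst (asm) emeasure_density) (auto simp: nn_integral_0_iff_AE indicator_def f_nonneg elim!: eventually_mono)
    then have "AE t in lborel. t \<notin> {x<..y}"
    proof eventually_elim
      case (elim t)
      show ?case
      proof
        assume "t \<in> {x<..y}"
        then have "t \<in> {a..b}" using \<open>x \<in> {a..b}\<close> \<open>y \<in> {a..b}\<close> by auto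
        with elim f_pos[of t] \<open>t \<in> {x<..y}\<close> show False by simp
      qed
    qed
    then have "emeasure lborel {x<..y} = 0"
      by (subst (asm) AE_iff_measurable[of "{x<..y}"]) auto
    with \<open>x < y\<close> show False by simp
  qed
  moreover have "F y - F x = \<nu>.prob {x<..y}"
    using \<open>x < y\<close> by (simp add: \<nu>.cdf_diff_eq)
  ultimately show "F x < F y"
    by (metis \<nu>.emeasure_eq_measure diff_gt_0_iff_gt ennreal_0 zero_less_measure_iff)
qed

lemma quantile_F:
  assumes "x \<in> {a<..b}"
  shows "quantile F (F x) = x"
proof -
  have "F y < F x" if "y < x" for y
  proof (cases "a \<le> y")
    case True
    then show ?thesis using F_strict_mono_on assms \<open>y < x\<close> by (auto intro: strict_mono_onD)
  next
    case False
    then have "F y \<le> F a" using F_mono by (simp add: monoD)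
    also have "F a < F x" using F_strict_mono_on assms by (auto intro: strict_mono_onD)
    finally show ?thesis .
  qed
  then have "{y. F x \<le> F y} = {x..}"
    using F_mono by (auto simp: monoD) (meson not_le)
  then show ?thesis by (simp add: quantile_def)
qed

lemma set_integral_substitution_F:
  fixes h :: "real \<Rightarrow> real"
  assumes [measurable]: "h \<in> borel_measurable borel"
  shows "(LBINT p:{0..1}. h p) = (LBINT r:{a..b}. f r * h (F r))"
proof -
  have "(LBINT p:{0..1}. h p) = (\<integral>r. h (F r) \<partial>density lborel (\<lambda>x. ennreal (f x)))"
    by (rule \<nu>.integral_comp_continuous_cdf[OF isCont_F, symmetric]) simp
  also have "\<dots> = (\<integral>r. indicator {a..b} r * h (F r) \<partial>density lborel (\<lambda>x. ennreal (f x)))"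
  proof (rule integral_cong_AE)
    show "AE r in density lborel (\<lambda>x. ennreal (f x)). h (F r) = indicator {a..b} r * h (F r)"
      using support by eventually_elim simp
  qed measurable
  also have "\<dots> = (LBINT r:{a..b}. f r * h (F r))"
    by (subst integral_density) (auto simp: f_nonneg set_lebesgue_integral_def mult_ac)
  finally show ?thesis .
qed

lemma double_set_integral_substitution_F:
  fixes k :: "real \<Rightarrow> real \<Rightarrow> real"
  assumes [measurable]: "(\<lambda>(p, p'). k p p') \<in> borel_measurable (borel \<Otimes>\<^sub>M borel)"
  shows "(LBINT p:{0..1}. LBINT p':{0..1}. k p p') = (LBINT r:{a..b}. LBINT r':{a..b}. f r * f r' * k (F r) (F r'))"
proof -
  have "(LBINT p:{0..1}. LBINT p':{0..1}. k p p') = (LBINT p:{0..1}. LBINT r':{a..b}. f r' * k p (F r'))"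
    by (intro set_lebesgue_integral_cong allI impI set_integral_substitution_F) (simp, measurable)
  also have "\<dots> = (LBINT r:{a..b}. f r * (LBINT r':{a..b}. f r' * k (F r) (F r')))"
    by (rule set_integral_substitution_F, rule borel_measurable_set_integral_snd) auto
  also have "\<dots> = (LBINT r:{a..b}. LBINT r':{a..b}. f r * f r' * k (F r) (F r'))"
    by (simp add: mult.assoc)
  finally show ?thesis .
qed

(* At r = a the quantile F (F a) = quantile F 0 is the junk value Inf UNIV, but both sides vanish
   there because F a = 0. *)
lemma density_mult_sigma2_integrand_eq_cov_kernel:
  assumes r: "r \<in> {a..b}" and r': "r' \<in> {a..b}"
  shows "f r * f r' * ((min (F r) (F r') - F r * F r') / (f (quantile F (F r)) * f (quantile F (F r')))
           * psi' (F r) * psi' (F r'))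
         = cov_kernel F psi' r r'"
proof (cases "r = a \<or> r' = a")
  case True
  with r r' have "min r r' = a" "F r = 0 \<or> F r' = 0"
    using F_left_end by auto
  moreover have "min (F r) (F r') = 0" if "F r = 0 \<or> F r' = 0"
    using that \<nu>.cdf_nonneg[of r] \<nu>.cdf_nonneg[of r'] by (auto simp: min_def)
  ultimately show ?thesis
    unfolding cov_kernel_def by (auto simp: F_left_end)
next
  case False
  with r r' have "r \<in> {a<..b}" "r' \<in> {a<..b}" by auto
  then show ?thesis
    using f_pos[OF r] f_pos[OF r']
    by (simp add: cov_kernel_def quantile_F min_of_mono[OF F_mono] field_simps)
qed

lemma sigma2_eq_cov_kernel:
  assumes [measurable]: "psi' \<in> borel_measurable borel"
  shows "sigma2 F f psi' = (LBINT r:{a..b}. LBINT r':{a..b}. cov_kernel F psi' r r')"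
proof -
  define K where "K p p' = (min p p' - p * p') / (f (quantile F p) * f (quantile F p')) * psi' p * psi' p'"
    for p p'
  have [measurable]: "quantile F \<in> borel_measurable borel"
    by (rule \<nu>.borel_measurable_quantile_cdf)
  have "sigma2 F f psi' = (LBINT p:{0..1}. LBINT p':{0..1}. K p p')"
    unfolding sigma2_def K_def ..
  also have "\<dots> = (LBINT r:{a..b}. LBINT r':{a..b}. f r * f r' * K (F r) (F r'))"
    by (rule double_set_integral_substitution_F) (unfold K_def, measurable)
  also have "\<dots> = (LBINT r:{a..b}. LBINT r':{a..b}. cov_kernel F psi' r r')"
    unfolding K_def by (intro set_lebesgue_integral_cong allI impI density_mult_sigma2_integrand_eq_cov_kernel) auto
  finally show ?thesis .
qed

end

lemma distributed_distr_borel_eq_density: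
  assumes "distributed M lborel Y g"
  shows "distr M borel Y = density lborel g"
proof -
  have "distr M borel Y = distr M lborel Y"
    by (rule distr_cong) simp_all
  then show ?thesis
    using distributed_distr_eq_density[OF assms] by simp
qed

lemma (in prob_space) positive_density_on_interval_if_distributed:
  assumes density: "distributed M lborel Y (\<lambda>x. ennreal (f x))" and f_nonneg: "\<And>x. 0 \<le> f x"
    and support: "AE \<omega> in M. Y \<omega> \<in> {a..b}" and f_inf: "0 < (INF r\<in>{a..b}. f r)"
  shows "positive_density_on_interval f a b"
proof (rule positive_density_on_interval.intro)
  note distr_eq = distributed_distr_borel_eq_density[OF density]
  have [measurable]: "Y \<in> borel_measurable M"
    using distributed_measurable[OF density] by simp
  show "f \<in> borel_measurable borel"
    using distributed_borel_measurable[OF density] f_nonneg by (simp add: borel_measurable_ennreal_iff)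
  show "prob_space (density lborel (\<lambda>x. ennreal (f x)))"
    using prob_space_distr[of Y borel] by (simp add: distr_eq)
  show "AE x in density lborel (\<lambda>x. ennreal (f x)). x \<in> {a..b}"
    unfolding distr_eq[symmetric] using support by (subst AE_distr_iff) auto
  show "0 < f x" if "x \<in> {a..b}" for x
  proof -
    have "(INF r\<in>{a..b}. f r) \<le> f x"
      by (rule cINF_lower[OF bdd_belowI2 that]) (rule f_nonneg)
    with f_inf show ?thesis by simp
  qed
qed (rule f_nonneg)

theorem theorem4:
  fixes M :: "'a measure" and X :: "nat \<Rightarrow> 'a \<Rightarrow> real"
    and F f f' psi' :: "real \<Rightarrow> real" and a b :: real
  assumes "prob_space M"
    and rv: "\<And>i. X i \<in> borel_measurable M"
    and indep: "prob_space.indep_vars M (\<lambda>_. borel) X UNIV"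
    and ident: "\<And>i. distr M borel (X i) = distr M borel (X 0)"
    and F_def: "F = cdf (distr M borel (X 0))"
    and f_nonneg: "\<And>x. f x \<ge> 0"
    and density: "distributed M lborel (X 0) (\<lambda>x. ennreal (f x))"
    and ab: "a < b"
    and support: "\<And>i. AE \<omega> in M. X i \<omega> \<in> {a..b}"
    and f_inf: "(INF r\<in>{a..b}. f r) > 0"
    and f_deriv: "\<And>r. r \<in> {a..b} \<Longrightarrow> (f has_real_derivative f' r) (at r within {a..b})"
    and f'_sup: "bdd_above (f' ` {a..b})"
    and psi'_meas: "psi' \<in> borel_measurable borel"
    and psi'_nonneg: "\<And>z. z \<in> {0..1} \<Longrightarrow> psi' z \<ge> 0"
    and psi'_int: "set_integrable lborel {0..1} psi'"
    and psi'_prob: "(LBINT z:{0..1}. psi' z) = 1"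
    and psi'_bdd: "\<exists>B. \<forall>z\<in>{0..1}. \<bar>psi' z\<bar> \<le> B"
    and psi'_cont: "AE r in lborel. continuous (at (F r) within {0..1}) psi'"
  shows "AE \<omega> in M. (\<lambda>n. sigma2_hat X psi' a b n \<omega>) \<longlonglongrightarrow> sigma2 F f psi'"
proof -
  interpret M: prob_space M by fact
  interpret positive_density_on_interval f a b
    using M.positive_density_on_interval_if_distributed[OF density f_nonneg support f_inf] .
  have F_eq: "F = cdf (density lborel (\<lambda>x. ennreal (f x)))"
    by (simp add: F_def distributed_distr_borel_eq_density[OF density])
  obtain B where B: "\<forall>z\<in>{0..1}. \<bar>psi' z\<bar> \<le> B"
    using psi'_bdd by blast
  have "AE \<omega> in M. \<forall>r. (\<lambda>n. ecdf X n \<omega> r) \<longlonglongrightarrow> F r"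
    using M.AE_ecdf_tendsto_continuous_cdf[OF indep ident] isCont_F by (simp add: F_def F_eq[symmetric])
  then show ?thesis
  proof eventually_elim
    case (elim \<omega>)
    show ?case
      unfolding sigma2_hat_eq_cov_kernel sigma2_eq_cov_kernel[OF psi'_meas, folded F_eq]
      by (rule tendsto_double_integral_cov_kernel[where G="\<lambda>n. ecdf X n \<omega>",
            OF ecdf_borel_measurable psi'_meas ecdf_bounds _ B psi'_cont]) (use elim ab in auto)
  qed
qed

end
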